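(* Let $\Gamma$ be a discrete group. The global $L^2$-character map induces a map $\operatorname{ch}^\Gamma\otimes_{\mathbb Z}\mathbb Q:A(\Gamma)\otimes_{\mathbb Z}\mathbb Q\to\prod_{(K)}\mathbb Q$ which is injective. If $\Gamma$ has only finitely many conjugacy classes of finite subgroups, it is bijective.
   Context: The Burnside group $A(\Gamma)$ is the Grothendieck group of the monoid (under disjoint union) of isomorphism classes of proper cocompact $\Gamma$-sets (all isotropy groups finite, finitely many orbits); it is free abelian on $[\Gamma/H]$, $H$ running over conjugacy classes of finite subgroups. For a finite subgroup $K$, with $WK=N_\Gamma K/K$, $\operatorname{ch}^\Gamma_K:A(\Gamma)\to\mathbb Q$ sends $[S]$ to $\sum_{i=1}^r|L_i|^{-1}$, where $WK/L_1,\dots,WK/L_r$ are the $WK$-orbits of $S^K$. The global $L^2$-character map is $\operatorname{ch}^\Gamma=\prod_{(K)}\operatorname{ch}^\Gamma_K:A(\Gamma)\to\prod_{(K)}\mathbb Q$, $(K)$ ranging over conjugacy classes of finite subgroups of $\Gamma$. *)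

theory Defs
  imports "HOL-Algebra.Group_Action" "HOL-Algebra.Left_Coset" Complex_Main
begin

definition fixset :: "'b set \<Rightarrow> ('a \<Rightarrow> 'b \<Rightarrow> 'b) \<Rightarrow> 'a set \<Rightarrow> 'b set" where
  "fixset E \<phi> K = {s \<in> E. \<forall>k\<in>K. \<phi> k s = s}"

definition weyl :: "('a, 'c) monoid_scheme \<Rightarrow> 'a set \<Rightarrow> 'a set monoid" where
  "weyl G K = (G\<lparr>carrier := normalizer G K\<rparr>) Mod K"

definition weyl_act :: "('a \<Rightarrow> 'b \<Rightarrow> 'b) \<Rightarrow> 'a set \<Rightarrow> 'b \<Rightarrow> 'b" where
  "weyl_act \<phi> C = \<phi> (SOME n. n \<in> C)"

definition chK :: "('a, 'c) monoid_scheme \<Rightarrow> 'a set \<Rightarrow> 'b set \<Rightarrow> ('a \<Rightarrow> 'b \<Rightarrow> 'b) \<Rightarrow> rat" where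
  "chK G K E \<phi> =
     (\<Sum>Orb \<in> orbits (weyl G K) (fixset E \<phi> K) (weyl_act \<phi>).
        1 / of_nat (card (stabilizer (weyl G K) (weyl_act \<phi>) (SOME s. s \<in> Orb))))"

definition ch_hom :: "('a, 'c) monoid_scheme \<Rightarrow> 'a set \<Rightarrow> 'a set \<Rightarrow> rat" where
  "ch_hom G K H = chK G K (lcosets\<^bsub>G\<^esub> H) (\<lambda>g C. g <#\<^bsub>G\<^esub> C)"

definition conjclass :: "('a, 'c) monoid_scheme \<Rightarrow> 'a set \<Rightarrow> 'a set set" where
  "conjclass G H = {g <#\<^bsub>G\<^esub> H #>\<^bsub>G\<^esub> inv\<^bsub>G\<^esub> g | g. g \<in> carrier G}"

definition fin_classes :: "('a, 'c) monoid_scheme \<Rightarrow> 'a set set set" where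
  "fin_classes G = {conjclass G H | H. subgroup H G \<and> finite H}"

text \<open>A(G) \<otimes> Q: A(G) is free abelian on the classes [G/H], so A(G) \<otimes> Q is the
  Q-vector space of finitely supported rational functions on fin_classes G.\<close>
definition burnside_Q :: "('a, 'c) monoid_scheme \<Rightarrow> ('a set set \<Rightarrow> rat) set" where
  "burnside_Q G = {x. finite {c. x c \<noteq> 0} \<and> (\<forall>c. c \<notin> fin_classes G \<longrightarrow> x c = 0)}"

definition prod_Q :: "('a, 'c) monoid_scheme \<Rightarrow> ('a set set \<Rightarrow> rat) set" where
  "prod_Q G = {y. \<forall>c. c \<notin> fin_classes G \<longrightarrow> y c = 0}"

text \<open>ch^G \<otimes> Q: the Q-linear extension of [G/H] \<mapsto> (ch_K[G/H])_(K).\<close>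
definition chQ :: "('a, 'c) monoid_scheme \<Rightarrow> ('a set set \<Rightarrow> rat) \<Rightarrow> ('a set set \<Rightarrow> rat)" where
  "chQ G x = (\<lambda>c. if c \<in> fin_classes G then
      (\<Sum>d \<in> {d. x d \<noteq> 0}. x d * ch_hom G (SOME K. K \<in> c) (SOME H. H \<in> d))
    else 0)"

end

theory Submission
  imports Defs
begin

text \<open>Index both sides by the conjugacy classes of finite subgroups, ordered by the order of
  the subgroup. The matrix \<open>ch\<^sub>K[\<Gamma>/H]\<close> of the character map is then triangular with nonzero
  diagonal: \<open>ch\<^sub>K[\<Gamma>/H] \<noteq> 0\<close> means that \<open>K\<close> fixes some coset \<open>aH\<close>, i.e. \<open>a\<inverse>Ka \<subseteq> H\<close>, so
  \<open>|K| < |H|\<close> unless \<open>(K) = (H)\<close>; and \<open>(\<Gamma>/K)\<^sup>K = N\<^sub>\<Gamma>K/K\<close> is a free transitive \<open>WK\<close>-set,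
  so \<open>ch\<^sub>K[\<Gamma>/K] = 1\<close>. A triangular system with nonzero diagonal has only the trivial
  solution among finitely supported vectors, and it is solvable by back substitution when
  there are only finitely many classes.\<close>

definition nonsingular_triangular_on ::
    "'x set \<Rightarrow> ('x \<Rightarrow> 'w::linorder) \<Rightarrow> ('x \<Rightarrow> 'x \<Rightarrow> 'b::zero) \<Rightarrow> bool" where
  "nonsingular_triangular_on S w M \<longleftrightarrow>
     (\<forall>c\<in>S. \<forall>d\<in>S. c \<noteq> d \<longrightarrow> M c d \<noteq> 0 \<longrightarrow> w c < w d) \<and> (\<forall>c\<in>S. M c c \<noteq> 0)"

lemma nonsingular_triangular_on_subset:
  "nonsingular_triangular_on S w M \<Longrightarrow> T \<subseteq> S \<Longrightarrow> nonsingular_triangular_on T w M"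
  by (auto simp: nonsingular_triangular_on_def)

lemma nonsingular_triangular_on_insert_max:
  assumes "nonsingular_triangular_on (insert m S) w M" "m \<notin> S"
    and "\<And>d. d \<in> S \<Longrightarrow> w d \<le> w m" "d \<in> S"
  shows "M m d = 0"
  using assms by (force simp: nonsingular_triangular_on_def)

lemma finite_ranking_induct_fresh[consumes 1, case_names empty insert]:
  fixes f :: "'x \<Rightarrow> 'w::linorder"
  assumes "finite S" "P {}"
    and "\<And>x S. finite S \<Longrightarrow> x \<notin> S \<Longrightarrow> (\<And>y. y \<in> S \<Longrightarrow> f y \<le> f x) \<Longrightarrow> P S \<Longrightarrow> P (insert x S)"
  shows "P S"
  using assms(1)
proof (induction rule: finite_ranking_induct[where f = f])
  case (insert x S)
  then show ?case using assms(3) by (cases "x \<in> S") (simp_all add: insert_absorb)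
qed (fact assms(2))

lemma triangular_system_homogeneous_imp_zero:
  fixes M :: "'x \<Rightarrow> 'x \<Rightarrow> 'b::idom" and w :: "'x \<Rightarrow> 'w::linorder"
  assumes "finite S" "nonsingular_triangular_on S w M"
    and "\<And>c. c \<in> S \<Longrightarrow> (\<Sum>d\<in>S. z d * M c d) = 0"
  shows "\<forall>d\<in>S. z d = 0"
  using assms
proof (induction S rule: finite_ranking_induct_fresh[where f = w])
  case empty
  then show ?case by simp
next
  case (insert m S)
  have row_m: "M m d = 0" if "d \<in> S" for d
    using insert.prems(1) insert.hyps(2,3) that by (rule nonsingular_triangular_on_insert_max)
  have "z m * M m m = (\<Sum>d\<in>insert m S. z d * M m d)"
    using insert.hyps(1,2) row_m by simp
  then have "z m = 0"
    using insert.prems by (simp add: nonsingular_triangular_on_def)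
  moreover have "\<forall>d\<in>S. z d = 0"
  proof (rule insert.IH)
    show "nonsingular_triangular_on S w M"
      using insert.prems(1) by (rule nonsingular_triangular_on_subset) auto
    show "(\<Sum>d\<in>S. z d * M c d) = 0" if "c \<in> S" for c
      using insert.prems(2)[of c] that insert.hyps(1,2) \<open>z m = 0\<close> by simp
  qed
  ultimately show ?case by simp
qed

lemma triangular_system_solvable:
  fixes M :: "'x \<Rightarrow> 'x \<Rightarrow> 'b::field" and w :: "'x \<Rightarrow> 'w::linorder"
  assumes "finite S" "nonsingular_triangular_on S w M"
  shows "\<exists>x. (\<forall>d. d \<notin> S \<longrightarrow> x d = 0) \<and> (\<forall>c\<in>S. (\<Sum>d\<in>S. x d * M c d) = y c)"
  using assms
proof (induction S arbitrary: y rule: finite_ranking_induct_fresh[where f = w])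
  case empty
  then show ?case by auto
next
  case (insert m S)
  have row_m: "M m d = 0" if "d \<in> S" for d
    using insert.prems(1) insert.hyps(2,3) that by (rule nonsingular_triangular_on_insert_max)
  have "M m m \<noteq> 0"
    using insert.prems by (simp add: nonsingular_triangular_on_def)
  define a where "a = y m / M m m"
  obtain x where x_supp: "\<forall>d. d \<notin> S \<longrightarrow> x d = 0"
    and x_sol: "\<forall>c\<in>S. (\<Sum>d\<in>S. x d * M c d) = y c - a * M c m"
    using insert.IH[of "\<lambda>c. y c - a * M c m"] insert.prems
      nonsingular_triangular_on_subset[of "insert m S" w M S] by blast
  have sum_insert:
    "(\<Sum>d\<in>insert m S. (x(m := a)) d * M c d) = a * M c m + (\<Sum>d\<in>S. x d * M c d)" for c
  proof -
    have "(\<Sum>d\<in>S. (x(m := a)) d * M c d) = (\<Sum>d\<in>S. x d * M c d)"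
      using insert.hyps(2) by (intro sum.cong) auto
    then show ?thesis using insert.hyps(1,2) by simp
  qed
  show ?case
  proof (intro exI conjI allI impI ballI)
    show "(x(m := a)) d = 0" if "d \<notin> insert m S" for d
      using that x_supp by simp
    show "(\<Sum>d\<in>insert m S. (x(m := a)) d * M c d) = y c" if "c \<in> insert m S" for c
      using that sum_insert[of c] x_sol row_m \<open>M m m \<noteq> 0\<close> by (auto simp: a_def)
  qed
qed

definition ch_matrix :: "('a, 'c) monoid_scheme \<Rightarrow> 'a set set \<Rightarrow> 'a set set \<Rightarrow> rat" where
  "ch_matrix G c d = ch_hom G (SOME K. K \<in> c) (SOME H. H \<in> d)"

lemma chQ_eq_sum:
  assumes "c \<in> fin_classes G" "finite S" "{d. x d \<noteq> 0} \<subseteq> S"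
  shows "chQ G x c = (\<Sum>d\<in>S. x d * ch_matrix G c d)"
proof -
  have "chQ G x c = (\<Sum>d\<in>{d. x d \<noteq> 0}. x d * ch_matrix G c d)"
    using assms(1) by (simp add: chQ_def ch_matrix_def)
  also have "\<dots> = (\<Sum>d\<in>S. x d * ch_matrix G c d)"
    by (rule sum.mono_neutral_left) (use assms(2,3) in auto)
  finally show ?thesis .
qed

context group
begin

lemma conj_coset_eq_image: "g <# K #> h = (\<lambda>k. g \<otimes> k \<otimes> h) ` K"
  by (auto simp: l_coset_def r_coset_def)

lemma conj_mem_conj_iff:
  assumes "H \<subseteq> carrier G" "g \<in> carrier G" "x \<in> carrier G"
  shows "g \<otimes> x \<otimes> inv g \<in> g <# H #> inv g \<longleftrightarrow> x \<in> H"
  using assms conjugation_is_inj[OF assms(2,3)] by (auto simp: conj_coset_eq_image)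

lemma card_conj:
  assumes "K \<subseteq> carrier G" "g \<in> carrier G"
  shows "card (g <# K #> inv g) = card K"
proof -
  have "inj_on (\<lambda>k. g \<otimes> k \<otimes> inv g) K"
    using assms by (intro inj_onI) (meson conjugation_is_inj subsetD)
  then show ?thesis by (simp add: conj_coset_eq_image card_image)
qed

lemma conj_conj:
  assumes "H \<subseteq> carrier G" "g \<in> carrier G" "x \<in> carrier G"
  shows "x <# (g <# H #> inv g) #> inv x = (x \<otimes> g) <# H #> inv (x \<otimes> g)"
  using assms by (simp add: coset_assoc lcos_m_assoc coset_mult_assoc l_coset_subset_G inv_mult_group)

lemma conjclass_conj:
  assumes "H \<subseteq> carrier G" "g \<in> carrier G"
  shows "conjclass G (g <# H #> inv g) = conjclass G H"
proof -
  have "y = (y \<otimes> inv g) \<otimes> g" if "y \<in> carrier G" for y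
    using that assms by (simp add: m_assoc)
  then show ?thesis
    using assms conj_conj unfolding conjclass_def by (auto, metis m_closed inv_closed)
qed

lemma fin_classes_representative:
  assumes "c \<in> fin_classes G"
  shows "subgroup (SOME K. K \<in> c) G \<and> finite (SOME K. K \<in> c) \<and> conjclass G (SOME K. K \<in> c) = c"
proof -
  obtain H where c: "c = conjclass G H" and H: "subgroup H G" "finite H"
    using assms by (auto simp: fin_classes_def)
  have "H = \<one> <# H #> inv \<one>"
    using subgroup.subset[OF H(1)] by (simp add: lcos_mult_one)
  then have "H \<in> c"
    unfolding c conjclass_def by blast
  then have "(SOME K. K \<in> c) \<in> c" by (rule someI)
  then obtain g where g: "g \<in> carrier G" "(SOME K. K \<in> c) = g <# H #> inv g"
    unfolding c conjclass_def by blast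
  show ?thesis
    using g H c subgroup_conjugation_is_surj2 conjclass_conj[OF subgroup.subset]
    by (simp add: conj_coset_eq_image)
qed

lemma lcoset_eq_iff:
  assumes "subgroup H G" "x \<in> carrier G" "y \<in> carrier G"
  shows "x <# H = y <# H \<longleftrightarrow> inv x \<otimes> y \<in> H"
proof
  assume "x <# H = y <# H"
  then have "y \<in> x <# H" using lcos_self[OF assms(3,1)] by simp
  then show "inv x \<otimes> y \<in> H" using subgroup.lcos_module_imp[OF assms(1) is_group assms(2)] by blast
next
  assume "inv x \<otimes> y \<in> H"
  then have "y \<in> x <# H" using subgroup.lcos_module_rev[OF assms(1) is_group assms(2,3)] by blast
  then show "x <# H = y <# H" using l_repr_independence[OF _ assms(2,1)] by blast
qed

lemma lcoset_fixed_iff_conj_subset: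
  assumes H: "subgroup H G" and K: "K \<subseteq> carrier G" and a: "a \<in> carrier G"
  shows "(\<forall>k\<in>K. k <# (a <# H) = a <# H) \<longleftrightarrow> inv a <# K #> a \<subseteq> H"
proof -
  have "k <# (a <# H) = a <# H \<longleftrightarrow> inv a \<otimes> k \<otimes> a \<in> H" if "k \<in> K" for k
  proof -
    have k: "k \<in> carrier G" using that K by blast
    have "k <# (a <# H) = a <# H \<longleftrightarrow> a <# H = (k \<otimes> a) <# H"
      using lcos_m_assoc[OF subgroup.subset[OF H] k a] by auto
    also have "\<dots> \<longleftrightarrow> inv a \<otimes> (k \<otimes> a) \<in> H"
      using lcoset_eq_iff[OF H a] k a by simp
    finally show ?thesis using k a by (simp add: m_assoc)
  qed
  then show ?thesis by (auto simp: conj_coset_eq_image)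
qed

lemma fixset_lcosets:
  assumes "subgroup H G" "K \<subseteq> carrier G"
  shows "fixset (lcosets H) (\<lambda>g C. g <# C) K = {a <# H | a. a \<in> carrier G \<and> inv a <# K #> a \<subseteq> H}"
  using lcoset_fixed_iff_conj_subset[OF assms] by (auto simp: fixset_def LCOSETS_def)

lemma ch_hom_nonzero_imp_subconjugate:
  assumes "subgroup H G" "K \<subseteq> carrier G" "ch_hom G K H \<noteq> 0"
  obtains a where "a \<in> carrier G" "inv a <# K #> a \<subseteq> H"
proof -
  have "fixset (lcosets H) (\<lambda>g C. g <# C) K \<noteq> {}"
    using assms(3) by (auto simp: ch_hom_def chK_def orbits_def)
  then show ?thesis using that fixset_lcosets[OF assms(1,2)] by auto
qed

lemma subconjugate_card_less:
  assumes K: "K \<subseteq> carrier G" and H: "finite H" and a: "a \<in> carrier G"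
    and sub: "inv a <# K #> a \<subseteq> H" and classes: "conjclass G K \<noteq> conjclass G H"
  shows "card K < card H"
proof -
  have "card (inv a <# K #> a) = card K"
    using card_conj[OF K, of "inv a"] a by simp
  moreover have "inv a <# K #> a \<noteq> H"
    using conjclass_conj[OF K, of "inv a"] a classes by auto
  ultimately show ?thesis
    using psubset_card_mono[OF H] sub by (metis psubsetI)
qed

lemma mem_normalizer_iff:
  "H \<subseteq> carrier G \<Longrightarrow> g \<in> normalizer G H \<longleftrightarrow> g \<in> carrier G \<and> g <# H #> inv g = H"
  by (simp add: normalizer_def stabilizer_def)

lemma normalizer_lcoset_eq_rcoset:
  assumes H: "H \<subseteq> carrier G" and g: "g \<in> normalizer G H"
  shows "g <# H = H #> g"
proof -
  have gG: "g \<in> carrier G" and "g <# H #> inv g = H"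
    using g mem_normalizer_iff[OF H] by auto
  then have "H #> g = (g <# H #> inv g) #> g" by simp
  also have "\<dots> = g <# H #> (inv g \<otimes> g)"
    using coset_mult_assoc[OF l_coset_subset_G[OF H gG]] gG by simp
  also have "\<dots> = g <# H"
    using gG H by (simp add: l_coset_subset_G)
  finally show ?thesis by simp
qed

lemma finite_subgroup_normalizer_iff:
  assumes K: "subgroup K G" "finite K"
  shows "a \<in> normalizer G K \<longleftrightarrow> a \<in> carrier G \<and> inv a <# K #> a \<subseteq> K"
proof -
  have KG: "K \<subseteq> carrier G" using subgroup.subset[OF K(1)] .
  have N: "subgroup (normalizer G K) G" using normalizer_imp_subgroup[OF KG] .
  show ?thesis
  proof
    assume "a \<in> normalizer G K"
    then have "inv a \<in> normalizer G K" and "a \<in> carrier G"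
      using subgroup.m_inv_closed[OF N] subgroup.mem_carrier[OF N] by auto
    then show "a \<in> carrier G \<and> inv a <# K #> a \<subseteq> K"
      using mem_normalizer_iff[OF KG] by simp
  next
    assume a: "a \<in> carrier G \<and> inv a <# K #> a \<subseteq> K"
    then have "inv a <# K #> a = K"
      using card_subset_eq[OF K(2)] card_conj[OF KG, of "inv a"] by simp
    then have "a <# K #> inv a = K"
      using subgroup_conjugation_is_surj0[OF _ KG, of a] a by simp
    then show "a \<in> normalizer G K"
      using mem_normalizer_iff[OF KG] a by simp
  qed
qed

lemma fixset_lcosets_self:
  assumes "subgroup K G" "finite K"
  shows "fixset (lcosets K) (\<lambda>g C. g <# C) K = (\<lambda>n. n <# K) ` normalizer G K"
  using fixset_lcosets[OF assms(1) subgroup.subset[OF assms(1)]]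
    finite_subgroup_normalizer_iff[OF assms] by auto

lemma carrier_weyl: "carrier (weyl G K) = (\<lambda>n. K #> n) ` normalizer G K"
  by (auto simp: weyl_def FactGroup_def RCOSETS_def r_coset_def)

lemma weyl_act_normalizer_lcoset:
  assumes K: "subgroup K G" and n: "n \<in> normalizer G K" and b: "b \<in> normalizer G K"
  shows "weyl_act (\<lambda>g C. g <# C) (K #> n) (b <# K) = (n \<otimes> b) <# K"
proof -
  have KG: "K \<subseteq> carrier G" using subgroup.subset[OF K] .
  have N: "subgroup (normalizer G K) G" using normalizer_imp_subgroup[OF KG] .
  have nG: "n \<in> carrier G" and bG: "b \<in> carrier G" and nb: "n \<otimes> b \<in> normalizer G K"
    using n b subgroup.mem_carrier[OF N] subgroup.m_closed[OF N] by auto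
  have "(SOME m. m \<in> K #> n) \<in> K #> n"
    using rcos_self[OF nG K] by (rule someI)
  then obtain k where k: "k \<in> K" "(SOME m. m \<in> K #> n) = k \<otimes> n"
    by (auto simp: r_coset_def)
  have kG: "k \<in> carrier G" using k KG by blast
  have "weyl_act (\<lambda>g C. g <# C) (K #> n) (b <# K) = k <# ((n \<otimes> b) <# K)"
    using k kG nG bG KG by (simp add: weyl_act_def lcos_m_assoc m_assoc)
  also have "\<dots> = (k <# K) #> (n \<otimes> b)"
    using normalizer_lcoset_eq_rcoset[OF KG nb] kG nG bG KG by (simp add: coset_assoc)
  also have "\<dots> = (n \<otimes> b) <# K"
    using coset_join3[OF kG K k(1)] normalizer_lcoset_eq_rcoset[OF KG nb] by simp
  finally show ?thesis .
qed

lemma normalizer_lcoset_eq_iff: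
  assumes K: "subgroup K G" and n: "n \<in> normalizer G K" and b: "b \<in> normalizer G K"
  shows "(n \<otimes> b) <# K = b <# K \<longleftrightarrow> n \<in> K"
proof -
  have KG: "K \<subseteq> carrier G" using subgroup.subset[OF K] .
  have N: "subgroup (normalizer G K) G" using normalizer_imp_subgroup[OF KG] .
  have nG: "n \<in> carrier G" and bG: "b \<in> carrier G" and "inv b \<in> normalizer G K"
    using n b subgroup.mem_carrier[OF N] subgroup.m_inv_closed[OF N] by auto
  then have conj_K: "inv b <# K #> inv (inv b) = K"
    using mem_normalizer_iff[OF KG] by blast
  have "(n \<otimes> b) <# K = b <# K \<longleftrightarrow> inv b \<otimes> (n \<otimes> b) \<in> K"
    using lcoset_eq_iff[OF K bG, of "n \<otimes> b"] nG bG by auto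
  also have "\<dots> \<longleftrightarrow> inv b \<otimes> n \<otimes> inv (inv b) \<in> inv b <# K #> inv (inv b)"
    using conj_K nG bG by (simp add: m_assoc)
  also have "\<dots> \<longleftrightarrow> n \<in> K"
    using conj_mem_conj_iff[OF KG _ nG, of "inv b"] bG by simp
  finally show ?thesis .
qed

lemma orbit_weyl_normalizer_lcoset:
  assumes K: "subgroup K G" and b: "b \<in> normalizer G K"
  shows "orbit (weyl G K) (weyl_act (\<lambda>g C. g <# C)) (b <# K) = (\<lambda>n. n <# K) ` normalizer G K"
proof -
  have N: "subgroup (normalizer G K) G"
    using normalizer_imp_subgroup[OF subgroup.subset[OF K]] .
  have "orbit (weyl G K) (weyl_act (\<lambda>g C. g <# C)) (b <# K)
      = (\<lambda>n. n <# K) ` ((\<lambda>n. n \<otimes> b) ` normalizer G K)"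
    unfolding orbit_def carrier_weyl using weyl_act_normalizer_lcoset[OF K _ b] by auto
  also have "(\<lambda>n. n \<otimes> b) ` normalizer G K = normalizer G K #> b"
    by (auto simp: r_coset_def)
  also have "\<dots> = normalizer G K"
    using subgroup.rcos_const[OF N is_group b] .
  finally show ?thesis .
qed

lemma subgroup_subset_normalizer:
  assumes "subgroup K G"
  shows "K \<subseteq> normalizer G K"
proof
  fix k assume k: "k \<in> K"
  then have "k \<in> carrier G" "inv k \<in> K"
    using subgroup.mem_carrier[OF assms] subgroup.m_inv_closed[OF assms] by auto
  then show "k \<in> normalizer G K"
    using k assms by (simp add: mem_normalizer_iff subgroup.subset coset_join2 coset_join3)
qed

lemma stabilizer_weyl_normalizer_lcoset:
  assumes K: "subgroup K G" and b: "b \<in> normalizer G K"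
  shows "stabilizer (weyl G K) (weyl_act (\<lambda>g C. g <# C)) (b <# K) = {K}"
proof -
  have "stabilizer (weyl G K) (weyl_act (\<lambda>g C. g <# C)) (b <# K)
      = (\<lambda>n. K #> n) ` {n \<in> normalizer G K. n \<in> K}"
    unfolding stabilizer_def carrier_weyl
    using weyl_act_normalizer_lcoset[OF K _ b] normalizer_lcoset_eq_iff[OF K _ b] by auto
  also have "{n \<in> normalizer G K. n \<in> K} = K"
    using subgroup_subset_normalizer[OF K] by blast
  also have "(\<lambda>n. K #> n) ` K = {K}"
    using K subgroup.one_closed[OF K] by (auto simp: coset_join2 subgroup.mem_carrier)
  finally show ?thesis .
qed

lemma ch_hom_self:
  assumes "subgroup K G" "finite K"
  shows "ch_hom G K K = 1"
proof -
  let ?\<Omega> = "(\<lambda>n. n <# K) ` normalizer G K"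
  have "\<one> \<in> normalizer G K"
    using subgroup_subset_normalizer[OF assms(1)] subgroup.one_closed[OF assms(1)] by blast
  then have "?\<Omega> \<noteq> {}" by blast
  have "orbits (weyl G K) (fixset (lcosets K) (\<lambda>g C. g <# C) K) (weyl_act (\<lambda>g C. g <# C)) = {?\<Omega>}"
    using \<open>?\<Omega> \<noteq> {}\<close> orbit_weyl_normalizer_lcoset[OF assms(1)]
    unfolding fixset_lcosets_self[OF assms] orbits_def by auto
  moreover have "(SOME s. s \<in> ?\<Omega>) \<in> ?\<Omega>"
    using \<open>?\<Omega> \<noteq> {}\<close> by (simp add: some_in_eq)
  ultimately show ?thesis
    using stabilizer_weyl_normalizer_lcoset[OF assms(1)] by (auto simp: ch_hom_def chK_def)
qed

lemma ch_matrix_triangular: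
  "nonsingular_triangular_on (fin_classes G) (\<lambda>c. card (SOME K. K \<in> c)) (ch_matrix G)"
  unfolding nonsingular_triangular_on_def ch_matrix_def
proof (intro conjI ballI impI)
  fix c assume "c \<in> fin_classes G"
  then show "ch_hom G (SOME K. K \<in> c) (SOME H. H \<in> c) \<noteq> 0"
    using fin_classes_representative ch_hom_self by simp
next
  fix c d assume c: "c \<in> fin_classes G" and d: "d \<in> fin_classes G" and "c \<noteq> d"
    and ne: "ch_hom G (SOME K. K \<in> c) (SOME H. H \<in> d) \<noteq> 0"
  let ?K = "SOME K. K \<in> c" and ?H = "SOME H. H \<in> d"
  have K: "?K \<subseteq> carrier G" "conjclass G ?K = c"
    and H: "subgroup ?H G" "finite ?H" "conjclass G ?H = d"
    using fin_classes_representative[OF c] fin_classes_representative[OF d]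
    by (auto simp: subgroup.subset)
  obtain a where "a \<in> carrier G" "inv a <# ?K #> a \<subseteq> ?H"
    using ch_hom_nonzero_imp_subconjugate[OF H(1) K(1) ne] .
  then show "card ?K < card ?H"
    using subconjugate_card_less[OF K(1) H(2)] K(2) H(3) \<open>c \<noteq> d\<close> by auto
qed

lemma inj_on_chQ: "inj_on (chQ G) (burnside_Q G)"
proof (rule inj_onI)
  fix x y assume x: "x \<in> burnside_Q G" and y: "y \<in> burnside_Q G" and eq: "chQ G x = chQ G y"
  define S where "S = {d. x d \<noteq> 0} \<union> {d. y d \<noteq> 0}"
  have supp: "{d. x d \<noteq> 0} \<subseteq> S" "{d. y d \<noteq> 0} \<subseteq> S"
    by (auto simp: S_def)
  have S: "finite S" "S \<subseteq> fin_classes G"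
    using x y by (auto simp: S_def burnside_Q_def)
  have "\<forall>d\<in>S. x d - y d = 0"
  proof (rule triangular_system_homogeneous_imp_zero)
    show "nonsingular_triangular_on S (\<lambda>c. card (SOME K. K \<in> c)) (ch_matrix G)"
      using ch_matrix_triangular S(2) by (rule nonsingular_triangular_on_subset)
    show "(\<Sum>d\<in>S. (x d - y d) * ch_matrix G c d) = 0" if "c \<in> S" for c
    proof -
      have c: "c \<in> fin_classes G" using that S(2) by blast
      have "(\<Sum>d\<in>S. (x d - y d) * ch_matrix G c d)
          = (\<Sum>d\<in>S. x d * ch_matrix G c d) - (\<Sum>d\<in>S. y d * ch_matrix G c d)"
        by (simp add: left_diff_distrib sum_subtractf)
      also have "\<dots> = chQ G x c - chQ G y c"
        using chQ_eq_sum[OF c S(1) supp(1)] chQ_eq_sum[OF c S(1) supp(2)] by simp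
      finally show ?thesis using eq by simp
    qed
  qed (fact S(1))
  show "x = y"
  proof
    fix d show "x d = y d"
    proof (cases "d \<in> S")
      case True
      then show ?thesis using \<open>\<forall>d\<in>S. x d - y d = 0\<close> by simp
    next
      case False
      then have "x d = 0" "y d = 0" using supp by blast+
      then show ?thesis by simp
    qed
  qed
qed

lemma chQ_image:
  assumes "finite (fin_classes G)"
  shows "chQ G ` burnside_Q G = prod_Q G"
proof
  show "chQ G ` burnside_Q G \<subseteq> prod_Q G"
    by (auto simp: prod_Q_def chQ_def)
  show "prod_Q G \<subseteq> chQ G ` burnside_Q G"
  proof
    fix y assume y: "y \<in> prod_Q G"
    obtain x where x_supp: "\<forall>d. d \<notin> fin_classes G \<longrightarrow> x d = 0"
      and x_sol: "\<forall>c\<in>fin_classes G. (\<Sum>d\<in>fin_classes G. x d * ch_matrix G c d) = y c"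
      using triangular_system_solvable[OF assms ch_matrix_triangular] by blast
    have supp: "{d. x d \<noteq> 0} \<subseteq> fin_classes G"
      using x_supp by blast
    then have "x \<in> burnside_Q G"
      using x_supp assms finite_subset by (auto simp: burnside_Q_def)
    moreover have "chQ G x = y"
    proof
      fix c show "chQ G x c = y c"
      proof (cases "c \<in> fin_classes G")
        case True
        then show ?thesis using chQ_eq_sum[OF True assms supp] x_sol by simp
      next
        case False
        then show ?thesis using y by (simp add: chQ_def prod_Q_def)
      qed
    qed
    ultimately show "y \<in> chQ G ` burnside_Q G" by blast
  qed
qed

end

theorem lemma8p10:
  fixes G :: "('a, 'c) monoid_scheme"
  assumes "group G"
  shows "inj_on (chQ G) (burnside_Q G) \<and>
         (finite (fin_classes G) \<longrightarrow> bij_betw (chQ G) (burnside_Q G) (prod_Q G))"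
  using group.inj_on_chQ[OF assms] group.chQ_image[OF assms] by (simp add: bij_betw_def)

end
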